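(* Let $\epsilon>0$, let $q$ be a positive integer, and let $\Lambda_\epsilon$ be an $\epsilon$-lattice. There is a (randomized) function $Q_{\epsilon,q}:\mathbb{R}^d\to\{0,1\}^b$, with $b=d\log q$, mapping each $\mathbf{x}\in\mathbb{R}^d$ to a string $Q_{\epsilon,q}(\mathbf{x})$ which specifies a subset $\Lambda'_\epsilon\subset\Lambda_\epsilon$ with the following properties: there exists $\mathbf{z}\in\Lambda'_\epsilon$ such that $\mathbf{z}$ is an unbiased estimator of $\mathbf{x}$ (i.e. $\mathbb{E}[\mathbf{z}]=\mathbf{x}$) with $\|\mathbf{z}-\mathbf{x}\|<7\epsilon$, and for all $\mathbf{w}\in\Lambda'_\epsilon\setminus\{\mathbf{z}\}$, $\|\mathbf{z}-\mathbf{w}\|\ge 2q\epsilon$.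
   Context: $\|\cdot\|$ is a fixed one of the $\ell_1,\ell_2,\ell_\infty$ norms. A lattice is the set of integer combinations of a basis of $\mathbb{R}^d$. Its packing radius $r_p$ is the supremum of $r$ such that balls of radius $r$ around distinct lattice points are disjoint; its cover radius $r_c$ is the infimum of $r$ such that balls of radius $r$ around lattice points cover $\mathbb{R}^d$. An $\epsilon$-lattice is a lattice with $\epsilon=r_p\le r_c\le3\epsilon$. *)

theory Defs
  imports "HOL-Analysis.Analysis" "HOL-Probability.Probability"
begin

text \<open>The fixed norm: one of l1, l2, l-infinity on real^'n (d = CARD('n)).\<close>
datatype normkind = L1 | L2 | Linf

fun nrm :: "normkind \<Rightarrow> real^'n \<Rightarrow> real" where
  "nrm L1 x = (\<Sum>i\<in>UNIV. \<bar>x $ i\<bar>)"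
| "nrm L2 x = norm x"
| "nrm Linf x = Max (range (\<lambda>i. \<bar>x $ i\<bar>))"

definition is_lattice :: "(real^'n) set \<Rightarrow> bool" where
  "is_lattice L \<longleftrightarrow> (\<exists>B :: 'n \<Rightarrow> real^'n.
      inj B \<and> independent (range B) \<and> span (range B) = UNIV \<and>
      L = range (\<lambda>c :: 'n \<Rightarrow> int. \<Sum>i\<in>UNIV. real_of_int (c i) *\<^sub>R B i))"

definition packing_radius :: "normkind \<Rightarrow> (real^'n) set \<Rightarrow> real" where
  "packing_radius k L = Sup {r. \<forall>u\<in>L. \<forall>v\<in>L. u \<noteq> v \<longrightarrow>
      {y. nrm k (y - u) < r} \<inter> {y. nrm k (y - v) < r} = {}}"

definition cover_radius :: "normkind \<Rightarrow> (real^'n) set \<Rightarrow> real" where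
  "cover_radius k L = Inf {r. (\<Union>u\<in>L. {y. nrm k (y - u) \<le> r}) = UNIV}"

definition eps_lattice :: "normkind \<Rightarrow> real \<Rightarrow> (real^'n) set \<Rightarrow> bool" where
  "eps_lattice k \<epsilon> L \<longleftrightarrow> is_lattice L \<and> packing_radius k L = \<epsilon> \<and>
      \<epsilon> \<le> cover_radius k L \<and> cover_radius k L \<le> 3 * \<epsilon>"

end

(* An epsilon-lattice has covering radius at most 3 epsilon < 7 epsilon / 2. If x were not in the convex
   hull of the lattice points within 7 epsilon of it, a hyperplane would separate them from x; stepping
   7 epsilon / 2 away from x across that hyperplane and taking a lattice point within covering distance
   gives a point within 7 epsilon on the wrong side. So x is a convex combination of nearby lattice
   points, and sampling z with these weights is unbiased. The string records the lattice coefficients of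
   z modulo q, i.e. one of q^d classes; two lattice points in the same class differ by q times a nonzero
   lattice vector, and nonzero lattice vectors have length at least twice the packing radius. *)

theory Submission
  imports Defs
begin

locale equivalent_norm =
  fixes N :: "'a::euclidean_space \<Rightarrow> real"
  assumes scale: "N (c *\<^sub>R x) = \<bar>c\<bar> * N x"
    and triangle: "N (x + y) \<le> N x + N y"
    and le_norm: "\<exists>C>0. \<forall>x. N x \<le> C * norm x"
    and norm_le: "\<exists>C>0. \<forall>x. norm x \<le> C * N x"
begin

lemma zero [simp]: "N 0 = 0"
  using scale[of 0 0] by simp

lemma minus [simp]: "N (- x) = N x"
  using scale[of "-1" x] by simp

lemma minus_commute: "N (x - y) = N (y - x)"
  using minus[of "y - x"] by simp

lemma nonneg: "0 \<le> N x"
  using triangle[of x "-x"] scale[of "-1" x] by simp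

lemma eq_0_iff: "N x = 0 \<longleftrightarrow> x = 0"
  using norm_le by (metis mult_zero_right norm_le_zero_iff zero)

lemma sum_le: "N (sum f A) \<le> (\<Sum>i\<in>A. N (f i))"
proof (induction A rule: infinite_finite_induct)
  case (insert i A)
  then show ?case
    using triangle[of "f i" "sum f A"] by simp
qed simp_all

lemma continuous: "continuous_on UNIV N"
proof -
  obtain C where "C > 0" and C: "\<And>x. N x \<le> C * norm x"
    using le_norm by blast
  have "dist (N x) (N y) \<le> C * dist x y" for x y
    using triangle[of "x - y" y] triangle[of "y - x" x] C[of "x - y"] C[of "y - x"]
    by (simp add: dist_real_def dist_norm norm_minus_commute)
  with \<open>C > 0\<close> have "C-lipschitz_on UNIV N"
    by (intro lipschitz_onI) auto
  then show ?thesis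
    by (rule lipschitz_on_continuous_on)
qed

lemma compact_unit_ball: "compact {w. N w \<le> 1}"
proof -
  obtain C where "C > 0" and C: "\<And>x. norm x \<le> C * N x"
    using norm_le by blast
  have "norm w \<le> C" if "N w \<le> 1" for w
  proof -
    have "C * N w \<le> C * 1"
      using that \<open>C > 0\<close> by (intro mult_left_mono) auto
    then show ?thesis
      using C[of w] by linarith
  qed
  then have "bounded {w. N w \<le> 1}"
    unfolding bounded_iff by blast
  moreover have "closed {w. N w \<le> 1}"
    using continuous by (intro closed_Collect_le) auto
  ultimately show ?thesis
    by (simp add: compact_eq_bounded_closed)
qed

text \<open>A unit vector \<open>v\<close> minimising \<open>a \<bullet> v\<close> realises the dual norm of \<open>a\<close>, which is \<open>- (a \<bullet> v)\<close>.\<close>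
lemma supporting_unit_vector:
  assumes "a \<noteq> 0"
  obtains v where "N v \<le> 1" "a \<bullet> v < 0" "\<And>w. a \<bullet> w \<le> - (a \<bullet> v) * N w"
proof -
  have "0 \<in> {w. N w \<le> 1}" "continuous_on {w. N w \<le> 1} (\<lambda>w. a \<bullet> w)"
    by (auto intro: continuous_intros)
  then obtain v where v: "N v \<le> 1" and min: "\<And>w. N w \<le> 1 \<Longrightarrow> a \<bullet> v \<le> a \<bullet> w"
    using continuous_attains_inf[OF compact_unit_ball, of "\<lambda>w. a \<bullet> w"] by blast
  have bound: "a \<bullet> w \<le> - (a \<bullet> v) * N w" for w
  proof (cases "w = 0")
    case False
    then have "N w > 0"
      using nonneg[of w] eq_0_iff[of w] by linarith
    then have "a \<bullet> v \<le> a \<bullet> ((- 1 / N w) *\<^sub>R w)"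
      by (intro min) (simp add: scale)
    with \<open>N w > 0\<close> show ?thesis
      by (simp add: field_simps)
  qed simp
  have "0 < a \<bullet> a"
    using assms by simp
  also have "\<dots> \<le> - (a \<bullet> v) * N a"
    by (rule bound)
  finally have "a \<bullet> v < 0"
    using nonneg[of a] by (simp add: mult_less_0_iff)
  with v bound show ?thesis
    using that by blast
qed

lemma finite_ball_if_separated:
  assumes "\<delta> > 0" and sep: "\<And>u v. u \<in> L \<Longrightarrow> v \<in> L \<Longrightarrow> u \<noteq> v \<Longrightarrow> \<delta> \<le> N (u - v)"
  shows "finite {u\<in>L. N (u - x) < R}"
proof -
  let ?S = "{u\<in>L. N (u - x) < R}"
  obtain C where "C > 0" and C: "\<And>x. N x \<le> C * norm x"
    using le_norm by blast
  obtain C' where "C' > 0" and C': "\<And>x. norm x \<le> C' * N x"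
    using norm_le by blast
  have "uniform_discrete ?S"
    unfolding uniform_discrete_def
  proof (intro exI[of _ "\<delta> / C"] conjI ballI impI)
    fix u v assume uv: "u \<in> ?S" "v \<in> ?S" "dist u v < \<delta> / C"
    have "N (u - v) \<le> C * dist u v"
      using C by (simp add: dist_norm)
    also have "\<dots> < \<delta>"
      using uv(3) \<open>C > 0\<close> by (simp add: pos_less_divide_eq mult.commute)
    finally show "u = v"
      using sep[of u v] uv(1,2) by force
  qed (use \<open>\<delta> > 0\<close> \<open>C > 0\<close> in simp)
  moreover have "bounded ?S"
    unfolding bounded_iff
  proof (intro exI[of _ "norm x + C' * R"] ballI)
    fix u assume "u \<in> ?S"
    then have "C' * N (u - x) \<le> C' * R"
      using \<open>C' > 0\<close> by simp
    then have "norm (u - x) \<le> C' * R"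
      using C'[of "u - x"] by linarith
    then show "norm u \<le> norm x + C' * R"
      using norm_triangle_ineq2[of u x] by linarith
  qed
  ultimately show ?thesis
    using uniform_discrete_finite_iff by blast
qed

text \<open>If a hyperplane with normal \<open>a\<close> separated \<open>x\<close> from the nearby points of \<open>L\<close>, a point of \<open>L\<close>
  within \<open>r\<close> of \<open>x + (R/2) v\<close>, for \<open>v\<close> a unit vector against \<open>a\<close>, would be nearby and on the wrong side.\<close>
lemma mem_convex_hull_nearby:
  assumes cover: "\<And>y. \<exists>p\<in>L. N (y - p) \<le> r" and "2 * r < R"
    and fin: "finite {u\<in>L. N (u - x) < R}"
  shows "x \<in> convex hull {u\<in>L. N (u - x) < R}"
proof (rule ccontr)
  let ?S = "{u\<in>L. N (u - x) < R}"
  assume notin: "x \<notin> convex hull ?S"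
  have closed: "closed (convex hull ?S)"
    using fin by (simp add: finite_imp_compact_convex_hull compact_imp_closed)
  obtain a b where ax: "a \<bullet> x < b" and "\<forall>y \<in> convex hull ?S. b < a \<bullet> y"
    using separating_hyperplane_closed_point[OF convex_convex_hull closed notin] by blast
  then have aS: "\<And>y. y \<in> ?S \<Longrightarrow> b < a \<bullet> y"
    by (simp add: hull_inc)
  obtain p0 where "p0 \<in> L" "N (x - p0) \<le> r"
    using cover by blast
  moreover from this have "r \<ge> 0"
    using nonneg[of "x - p0"] by linarith
  ultimately have "p0 \<in> ?S"
    using \<open>2 * r < R\<close> minus_commute[of x p0] by simp
  then have "a \<noteq> 0"
    using aS[of p0] ax by auto
  then obtain v where v: "N v \<le> 1" "a \<bullet> v < 0" and dual: "\<And>w. a \<bullet> w \<le> - (a \<bullet> v) * N w"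
    using supporting_unit_vector by blast
  define y where "y = x + (R / 2) *\<^sub>R v"
  obtain p where "p \<in> L" and "N (y - p) \<le> r"
    using cover by blast
  then have py: "N (p - y) \<le> r"
    using minus_commute[of p y] by simp
  have "N (y - x) \<le> R / 2"
    using v(1) \<open>2 * r < R\<close> \<open>r \<ge> 0\<close> by (simp add: y_def scale mult_left_le)
  then have "N (p - x) < R"
    using triangle[of "p - y" "y - x"] py \<open>2 * r < R\<close> by simp
  with \<open>p \<in> L\<close> have "b < a \<bullet> p"
    by (intro aS) simp
  have "a \<bullet> (p - y) \<le> - (a \<bullet> v) * N (p - y)"
    by (rule dual)
  also have "\<dots> \<le> - (a \<bullet> v) * r"
    using py v(2) by (simp add: mult_left_mono)
  finally have "a \<bullet> p \<le> a \<bullet> x + (a \<bullet> v) * (R / 2 - r)"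
    by (simp add: y_def inner_diff_right inner_add_right algebra_simps)
  also have "\<dots> < a \<bullet> x"
    using v(2) \<open>2 * r < R\<close> by (simp add: mult_neg_pos)
  finally show False
    using \<open>b < a \<bullet> p\<close> ax by simp
qed

end

lemma pmf_with_mean_in_convex_hull:
  fixes x :: "'a::euclidean_space"
  assumes "finite S" and "x \<in> convex hull S"
  obtains p :: "'a pmf" where "set_pmf p \<subseteq> S" and "measure_pmf.expectation p (\<lambda>z. z) = x"
proof -
  obtain u where u: "\<forall>z\<in>S. 0 \<le> u z" "sum u S = 1" "(\<Sum>z\<in>S. u z *\<^sub>R z) = x"
    using assms by (auto simp: convex_hull_finite)
  define g where "g z = (if z \<in> S then u z else 0)" for z
  have g_nonneg: "\<And>z. 0 \<le> g z"
    using u(1) by (simp add: g_def)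
  have "(\<integral>\<^sup>+z. ennreal (g z) \<partial>count_space UNIV) = (\<Sum>z\<in>S. ennreal (g z))"
    using assms(1) by (intro nn_integral_count_space') (auto simp: g_def)
  also have "\<dots> = ennreal (\<Sum>z\<in>S. g z)"
    using g_nonneg by (simp add: sum_ennreal)
  also have "\<dots> = 1"
    using u(2) by (simp add: g_def)
  finally have g_prob: "(\<integral>\<^sup>+z. ennreal (g z) \<partial>count_space UNIV) = 1" .
  define p where "p = embed_pmf g"
  have pmf_p: "pmf p z = g z" for z
    unfolding p_def by (rule pmf_embed_pmf[OF g_nonneg g_prob])
  have set_p: "set_pmf p \<subseteq> S"
    unfolding p_def set_embed_pmf[OF g_nonneg g_prob] by (auto simp: g_def)
  have "measure_pmf.expectation p (\<lambda>z. z) = (\<Sum>z\<in>S. pmf p z *\<^sub>R z)"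
    using assms(1) set_p by (intro integral_measure_pmf) auto
  also have "\<dots> = x"
    using u(3) by (simp add: pmf_p g_def)
  finally show ?thesis
    using that set_p by blast
qed

lemma bool_list_encoding:
  assumes "finite A" and "card A \<le> 2 ^ n"
  obtains enc :: "'a \<Rightarrow> bool list" where "inj_on enc A" and "\<And>a. a \<in> A \<Longrightarrow> length (enc a) = n"
proof -
  have fin: "finite {xs :: bool list. length xs = n}"
    and card: "card {xs :: bool list. length xs = n} = 2 ^ n"
    using finite_lists_length_eq[of "UNIV :: bool set" n] card_lists_length_eq[of "UNIV :: bool set" n]
    by simp_all
  obtain enc :: "'a \<Rightarrow> bool list" where "enc ` A \<subseteq> {xs. length xs = n}" "inj_on enc A"
    using card_le_inj[OF assms(1) fin] assms(2) unfolding card by blast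
  then show ?thesis
    using that by blast
qed

lemma pow_le_two_pow_ceiling_log:
  assumes "q \<ge> 1"
  shows "q ^ d \<le> 2 ^ nat \<lceil>real d * log 2 (real q)\<rceil>"
proof -
  have "real q ^ d = 2 powr (real d * log 2 (real q))"
    using assms by (simp add: powr_power[symmetric])
  also have "\<dots> \<le> 2 powr real (nat \<lceil>real d * log 2 (real q)\<rceil>)"
    using assms by (intro powr_mono) auto
  finally have "real (q ^ d) \<le> real (2 ^ nat \<lceil>real d * log 2 (real q)\<rceil>)"
    by (simp add: powr_realpow)
  then show ?thesis
    by (simp only: of_nat_le_iff)
qed

definition int_comb :: "('i::finite \<Rightarrow> 'a::real_vector) \<Rightarrow> ('i \<Rightarrow> int) \<Rightarrow> 'a" where
  "int_comb B c = (\<Sum>i\<in>UNIV. of_int (c i) *\<^sub>R B i)"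

lemma int_comb_zero [simp]: "int_comb B (\<lambda>_. 0) = 0"
  by (simp add: int_comb_def)

lemma int_comb_diff: "int_comb B c - int_comb B c' = int_comb B (\<lambda>i. c i - c' i)"
  by (simp add: int_comb_def sum_subtractf[symmetric] scaleR_diff_left)

lemma int_comb_mult: "int_comb B (\<lambda>i. int q * m i) = real q *\<^sub>R int_comb B m"
  by (simp add: int_comb_def scaleR_sum_right)

text \<open>No independence of \<open>B\<close> is needed: any choice of coefficients yields such a classification.\<close>
lemma int_comb_residue_classes:
  fixes B :: "'i::finite \<Rightarrow> 'a::real_vector"
  assumes "q > 0"
  obtains cls :: "'a \<Rightarrow> 'i \<Rightarrow> int"
  where "\<And>u. cls u \<in> UNIV \<rightarrow> {0..<int q}"
    and "\<And>u v. u \<in> range (int_comb B) \<Longrightarrow> v \<in> range (int_comb B) \<Longrightarrow> cls u = cls v \<Longrightarrow>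
           \<exists>w \<in> range (int_comb B). u - v = real q *\<^sub>R w"
proof -
  define coeff where "coeff u = (SOME c. u = int_comb B c)" for u
  define cls where "cls u i = coeff u i mod int q" for u i
  show ?thesis
  proof (rule that[of cls])
    show "cls u \<in> UNIV \<rightarrow> {0..<int q}" for u
      using assms by (simp add: cls_def)
    show "\<exists>w \<in> range (int_comb B). u - v = real q *\<^sub>R w"
      if "u \<in> range (int_comb B)" "v \<in> range (int_comb B)" "cls u = cls v" for u v
    proof -
      have u: "u = int_comb B (coeff u)"
        unfolding coeff_def by (rule someI_ex[of "\<lambda>c. u = int_comb B c"]) (use that(1) in blast)
      have v: "v = int_comb B (coeff v)"
        unfolding coeff_def by (rule someI_ex[of "\<lambda>c. v = int_comb B c"]) (use that(2) in blast)
      define m where "m i = (coeff u i - coeff v i) div int q" for i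
      have "int q dvd coeff u i - coeff v i" for i
        using fun_cong[OF that(3), of i] by (simp add: cls_def mod_eq_dvd_iff)
      then have "coeff u i - coeff v i = int q * m i" for i
        by (simp add: m_def)
      then have "u - v = real q *\<^sub>R int_comb B m"
        by (subst u, subst v) (simp add: int_comb_diff int_comb_mult)
      then show ?thesis
        by blast
    qed
  qed
qed

lemma (in equivalent_norm) int_comb_covering:
  fixes B :: "'i::finite \<Rightarrow> 'a"
  assumes "inj B" and "span (range B) = UNIV"
  shows "\<exists>p \<in> range (int_comb B). N (y - p) \<le> (\<Sum>i\<in>UNIV. N (B i))"
proof -
  have "y \<in> span (range B)"
    using assms(2) by simp
  then obtain u where "y = (\<Sum>v\<in>range B. u v *\<^sub>R v)"
    using span_finite[of "range B"] by auto
  then have y: "y = (\<Sum>i\<in>UNIV. u (B i) *\<^sub>R B i)"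
    using sum.reindex[OF assms(1), of "\<lambda>v. u v *\<^sub>R v"] by simp
  define p where "p = int_comb B (\<lambda>i. \<lfloor>u (B i)\<rfloor>)"
  have "y - p = (\<Sum>i\<in>UNIV. frac (u (B i)) *\<^sub>R B i)"
    by (simp add: y p_def int_comb_def frac_def sum_subtractf[symmetric] scaleR_diff_left)
  then have "N (y - p) \<le> (\<Sum>i\<in>UNIV. N (frac (u (B i)) *\<^sub>R B i))"
    using sum_le by simp
  also have "\<dots> \<le> (\<Sum>i\<in>UNIV. N (B i))"
  proof (rule sum_mono)
    fix i
    have "0 \<le> frac (u (B i))" "frac (u (B i)) \<le> 1"
      by (simp_all add: frac_ge_0 less_imp_le[OF frac_lt_1])
    then show "N (frac (u (B i)) *\<^sub>R B i) \<le> N (B i)"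
      using nonneg[of "B i"] by (simp add: scale mult_left_le_one_le)
  qed
  finally have "N (y - p) \<le> (\<Sum>i\<in>UNIV. N (B i))" .
  then show ?thesis
    unfolding p_def by blast
qed

lemma nrm_Linf_ge: "\<bar>x $ i\<bar> \<le> nrm Linf x"
  by (simp add: Max_ge)

lemma nrm_Linf_le: "(\<And>i. \<bar>x $ i\<bar> \<le> c) \<Longrightarrow> nrm Linf x \<le> c"
  by (auto simp: Max_le_iff)

lemma equivalent_norm_nrm: "equivalent_norm (nrm k :: real^'n \<Rightarrow> real)"
proof
  show "nrm k (c *\<^sub>R x) = \<bar>c\<bar> * nrm k x" for c and x :: "real^'n"
  proof (cases k)
    case Linf
    have "mono (\<lambda>t. \<bar>c\<bar> * t)"
      by (intro monoI mult_left_mono) auto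
    then have "\<bar>c\<bar> * Max (range (\<lambda>i. \<bar>x $ i\<bar>)) = Max ((\<lambda>t. \<bar>c\<bar> * t) ` range (\<lambda>i. \<bar>x $ i\<bar>))"
      by (intro mono_Max_commute) auto
    then show ?thesis
      using Linf by (simp add: abs_mult image_comp comp_def)
  qed (simp_all add: abs_mult sum_distrib_left)
  show "nrm k (x + y) \<le> nrm k x + nrm k y" for x y :: "real^'n"
  proof (cases k)
    case L1
    then show ?thesis
      by (simp add: sum.distrib[symmetric] sum_mono abs_triangle_ineq)
  next
    case Linf
    have "\<bar>x $ i + y $ i\<bar> \<le> nrm Linf x + nrm Linf y" for i
      using abs_triangle_ineq[of "x $ i" "y $ i"] nrm_Linf_ge[of x i] nrm_Linf_ge[of y i] by linarith
    then show ?thesis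
      using Linf by (simp add: nrm_Linf_le)
  qed (simp add: norm_triangle_ineq)
  show "\<exists>C>0. \<forall>x::real^'n. nrm k x \<le> C * norm x"
  proof (cases k)
    case L1
    have "nrm L1 x \<le> real CARD('n) * norm x" for x :: "real^'n"
      using sum_mono[of UNIV "\<lambda>i. \<bar>x $ i\<bar>" "\<lambda>i. norm x"] component_le_norm_cart by auto
    then show ?thesis
      using L1 by (intro exI[of _ "real CARD('n)"]) auto
  next
    case Linf
    then show ?thesis
      by (intro exI[of _ 1]) (auto intro: nrm_Linf_le component_le_norm_cart)
  qed (intro exI[of _ 1], simp)
  show "\<exists>C>0. \<forall>x::real^'n. norm x \<le> C * nrm k x"
  proof (cases k)
    case L1
    then show ?thesis
      by (intro exI[of _ 1]) (auto simp: norm_le_l1_cart)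
  next
    case Linf
    have "norm x \<le> real CARD('n) * nrm Linf x" for x :: "real^'n"
      using sum_mono[of UNIV "\<lambda>i. \<bar>x $ i\<bar>" "\<lambda>i. nrm Linf x"] nrm_Linf_ge norm_le_l1_cart[of x]
      by fastforce
    then show ?thesis
      using Linf by (intro exI[of _ "real CARD('n)"]) auto
  qed (intro exI[of _ 1], simp)
qed

interpretation nrm: equivalent_norm "nrm k" for k
  by (rule equivalent_norm_nrm)

text \<open>Balls of radius beyond half the distance of two lattice points meet at their midpoint.\<close>
lemma two_packing_radius_le:
  assumes "u \<in> L" "v \<in> L" "u \<noteq> v"
  shows "2 * packing_radius k L \<le> nrm k (u - v)"
proof -
  let ?P = "{r. \<forall>u\<in>L. \<forall>v\<in>L. u \<noteq> v \<longrightarrow> {y. nrm k (y - u) < r} \<inter> {y. nrm k (y - v) < r} = {}}"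
  have "\<not> nrm k z < 0" for z
    using nrm.nonneg[of k z] by linarith
  then have "0 \<in> ?P"
    by blast
  moreover have "r \<le> nrm k (u - v) / 2" if "r \<in> ?P" for r
  proof (rule ccontr)
    assume "\<not> r \<le> nrm k (u - v) / 2"
    moreover define y where "y = u + (1/2) *\<^sub>R (v - u)"
    moreover have "y - u = (1/2) *\<^sub>R (v - u)" "y - v = (1/2) *\<^sub>R (u - v)"
      unfolding y_def vec_eq_iff by (simp_all add: field_simps)
    ultimately have "nrm k (y - u) < r" "nrm k (y - v) < r"
      using nrm.minus_commute[of k u v] by (simp_all add: nrm.scale)
    then show False
      using that assms by blast
  qed
  ultimately have "Sup ?P \<le> nrm k (u - v) / 2"
    by (intro cSup_least) auto
  then show ?thesis
    by (simp add: packing_radius_def)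
qed

lemma is_latticeE:
  assumes "is_lattice L"
  obtains B :: "'n \<Rightarrow> real^'n" where "inj B" "span (range B) = UNIV" "L = range (int_comb B)"
proof -
  from assms obtain B :: "'n \<Rightarrow> real^'n" where "inj B" "span (range B) = UNIV"
    and "L = range (\<lambda>c. \<Sum>i\<in>UNIV. real_of_int (c i) *\<^sub>R B i)"
    unfolding is_lattice_def by blast
  then show ?thesis
    using that by (simp add: int_comb_def[abs_def])
qed

text \<open>\<open>cover_radius\<close> is an infimum, which carries information only once some covering radius is known
  to exist; rounding the coordinates in a basis down provides one.\<close>
lemma lattice_covering:
  fixes L :: "(real^'n) set"
  assumes "is_lattice L" and "cover_radius k L < r"
  shows "\<exists>p\<in>L. nrm k (y - p) \<le> r"
proof -
  let ?C = "{r. (\<Union>u\<in>L. {y. nrm k (y - u) \<le> r}) = UNIV}"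
  obtain B :: "'n \<Rightarrow> real^'n" where "inj B" "span (range B) = UNIV" "L = range (int_comb B)"
    using assms(1) by (rule is_latticeE)
  then have "\<exists>p\<in>L. nrm k (z - p) \<le> (\<Sum>i\<in>UNIV. nrm k (B i))" for z
    using nrm.int_comb_covering by simp
  then have "(\<Sum>i\<in>UNIV. nrm k (B i)) \<in> ?C"
    by blast
  then obtain r' where "r' \<in> ?C" "r' < r"
    using cInf_lessD[of ?C r] assms(2) unfolding cover_radius_def by blast
  then obtain p where "p \<in> L" "nrm k (y - p) \<le> r'"
    by blast
  with \<open>r' < r\<close> show ?thesis
    by force
qed

lemma card_residue_vectors:
  "finite ((UNIV :: 'n::finite set) \<rightarrow> {0..<int q})" "card ((UNIV :: 'n set) \<rightarrow> {0..<int q}) = q ^ CARD('n)"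
  by (simp_all add: PiE_UNIV_domain[symmetric] card_PiE finite_PiE)

lemma eps_lattice_unbiased_rounding:
  fixes L :: "(real^'n) set"
  assumes "\<epsilon> > 0" and "eps_lattice k \<epsilon> L"
  obtains p :: "(real^'n) pmf"
  where "\<And>z. z \<in> set_pmf p \<Longrightarrow> z \<in> L" and "\<And>z. z \<in> set_pmf p \<Longrightarrow> nrm k (z - x) < 7 * \<epsilon>"
    and "finite (set_pmf p)" and "measure_pmf.expectation p (\<lambda>z. z) = x"
proof -
  let ?S = "{u\<in>L. nrm k (u - x) < 7 * \<epsilon>}"
  have "2 * \<epsilon> \<le> nrm k (u - v)" if "u \<in> L" "v \<in> L" "u \<noteq> v" for u v
    using two_packing_radius_le[OF that, of k] assms(2) by (simp add: eps_lattice_def)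
  then have fin: "finite ?S"
    using assms(1) by (intro nrm.finite_ball_if_separated[of "2 * \<epsilon>"]) auto
  \<comment> \<open>any radius strictly between \<open>3 \<epsilon>\<close> and \<open>7 \<epsilon> / 2\<close> would do\<close>
  have cover: "\<exists>p\<in>L. nrm k (y - p) \<le> 13 * \<epsilon> / 4" for y
    using assms by (intro lattice_covering) (auto simp: eps_lattice_def)
  have "x \<in> convex hull ?S"
    using assms(1) by (intro nrm.mem_convex_hull_nearby[OF cover _ fin]) simp
  then obtain p where "set_pmf p \<subseteq> ?S" "measure_pmf.expectation p (\<lambda>z. z) = x"
    using pmf_with_mean_in_convex_hull[OF fin] by blast
  moreover from this(1) have "finite (set_pmf p)"
    using fin by (rule finite_subset)
  ultimately show ?thesis
    using that by auto
qed

lemma eps_lattice_residue_code: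
  fixes L :: "(real^'n) set"
  assumes "q \<ge> 1" and "eps_lattice k \<epsilon> L"
  obtains code :: "real^'n \<Rightarrow> bool list" and D :: "bool list \<Rightarrow> (real^'n) set"
  where "\<And>z. length (code z) = nat \<lceil>real CARD('n) * log 2 (real q)\<rceil>"
    and "\<And>s. D s \<subseteq> L" and "\<And>z. z \<in> L \<Longrightarrow> z \<in> D (code z)"
    and "\<And>z w. z \<in> L \<Longrightarrow> w \<in> D (code z) - {z} \<Longrightarrow> 2 * real q * \<epsilon> \<le> nrm k (z - w)"
proof -
  obtain B :: "'n \<Rightarrow> real^'n" where L: "L = range (int_comb B)"
    using assms(2) is_latticeE unfolding eps_lattice_def by metis
  obtain cls :: "real^'n \<Rightarrow> 'n \<Rightarrow> int" where cls_range: "\<And>u. cls u \<in> UNIV \<rightarrow> {0..<int q}"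
    and cls_eq: "\<And>u v. u \<in> L \<Longrightarrow> v \<in> L \<Longrightarrow> cls u = cls v \<Longrightarrow> \<exists>w \<in> L. u - v = real q *\<^sub>R w"
    using int_comb_residue_classes[of q B] assms(1) unfolding L by auto
  obtain enc :: "('n \<Rightarrow> int) \<Rightarrow> bool list" where enc_inj: "inj_on enc (UNIV \<rightarrow> {0..<int q})"
    and enc_length: "\<And>f. f \<in> UNIV \<rightarrow> {0..<int q} \<Longrightarrow> length (enc f) = nat \<lceil>real CARD('n) * log 2 (real q)\<rceil>"
    using bool_list_encoding[OF card_residue_vectors(1)] card_residue_vectors(2)
      pow_le_two_pow_ceiling_log[OF assms(1)] by metis
  define code where "code z = enc (cls z)" for z
  define D where "D s = {w \<in> L. code w = s}" for s
  show ?thesis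
  proof (rule that[of code D])
    show "length (code z) = nat \<lceil>real CARD('n) * log 2 (real q)\<rceil>" for z
      unfolding code_def using cls_range by (rule enc_length)
    show "D s \<subseteq> L" "z \<in> L \<Longrightarrow> z \<in> D (code z)" for s z
      unfolding D_def by auto
    fix z w
    assume "z \<in> L" "w \<in> D (code z) - {z}"
    then have "w \<in> L" "w \<noteq> z" "cls w = cls z"
      using inj_onD[OF enc_inj _ cls_range cls_range] by (auto simp: D_def code_def)
    then obtain v where "v \<in> L" and zw: "z - w = real q *\<^sub>R v"
      using cls_eq \<open>z \<in> L\<close> by metis
    have "0 \<in> L"
      unfolding L by (metis int_comb_zero rangeI)
    moreover have "v \<noteq> 0"
      using zw \<open>w \<noteq> z\<close> by auto
    ultimately have "2 * \<epsilon> \<le> nrm k v"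
      using two_packing_radius_le[OF \<open>v \<in> L\<close>, of 0 k] assms(2) by (simp add: eps_lattice_def)
    then have "real q * (2 * \<epsilon>) \<le> real q * nrm k v"
      by (rule mult_left_mono) simp
    also have "\<dots> = nrm k (z - w)"
      unfolding zw nrm.scale by simp
    finally show "2 * real q * \<epsilon> \<le> nrm k (z - w)"
      by (simp add: mult_ac)
  qed
qed

theorem lemma14:
  fixes k :: normkind and \<epsilon> :: real and q :: nat and L :: "(real^'n) set"
  assumes "\<epsilon> > 0" and "q \<ge> 1" and "eps_lattice k \<epsilon> L"
  defines "b \<equiv> nat \<lceil>real CARD('n) * log 2 (real q)\<rceil>"
  shows "\<exists>D :: bool list \<Rightarrow> (real^'n) set. \<forall>x :: real^'n.
           \<exists>P :: ((real^'n) \<times> bool list) pmf.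
             integrable (measure_pmf P) fst \<and>
             measure_pmf.expectation P fst = x \<and>
             (\<forall>(z, s) \<in> set_pmf P.
                length s = b \<and> D s \<subseteq> L \<and> z \<in> D s \<and>
                nrm k (z - x) < 7 * \<epsilon> \<and>
                (\<forall>w \<in> D s - {z}. nrm k (z - w) \<ge> 2 * real q * \<epsilon>))"
proof -
  obtain code :: "real^'n \<Rightarrow> bool list" and D :: "bool list \<Rightarrow> (real^'n) set"
    where code: "\<And>z. length (code z) = b" "\<And>s. D s \<subseteq> L" "\<And>z. z \<in> L \<Longrightarrow> z \<in> D (code z)"
      "\<And>z w. z \<in> L \<Longrightarrow> w \<in> D (code z) - {z} \<Longrightarrow> 2 * real q * \<epsilon> \<le> nrm k (z - w)"
    using eps_lattice_residue_code[OF assms(2,3)] unfolding b_def by blast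
  show ?thesis
  proof (intro exI[of _ D] allI)
    fix x :: "real^'n"
    obtain p where p: "\<And>z. z \<in> set_pmf p \<Longrightarrow> z \<in> L" "\<And>z. z \<in> set_pmf p \<Longrightarrow> nrm k (z - x) < 7 * \<epsilon>"
      "finite (set_pmf p)" "measure_pmf.expectation p (\<lambda>z. z) = x"
      using eps_lattice_unbiased_rounding[OF assms(1,3), where x = x] by blast
    let ?P = "map_pmf (\<lambda>z. (z, code z)) p"
    show "\<exists>P. integrable (measure_pmf P) fst \<and> measure_pmf.expectation P fst = x \<and>
        (\<forall>(z, s) \<in> set_pmf P. length s = b \<and> D s \<subseteq> L \<and> z \<in> D s \<and>
          nrm k (z - x) < 7 * \<epsilon> \<and> (\<forall>w \<in> D s - {z}. nrm k (z - w) \<ge> 2 * real q * \<epsilon>))"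
      using p code by (intro exI[of _ ?P] conjI integrable_measure_pmf_finite) auto
  qed
qed

end
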